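(* Let $j\in\mathbb{N}$, $1\le r\le\infty$ and $s<j-\frac12$. Then for any $T>0$ the flow map $S:\hat H^s_r(\mathbb{T})\times(-T,T)\to\hat H^s_r(\mathbb{T})$ of the periodic Cauchy problem $$i\partial_tu+(-1)^{j+1}\partial_x^{2j}u=iu^2\,\partial_x^{2j-1}\overline u$$ cannot be uniformly continuous on bounded sets.
   Context: $\mathbb{T}=\mathbb{R}/2\pi\mathbb{Z}$; $\|u\|_{\hat H^s_r(\mathbb{T})}=\|\langle k\rangle^s\hat u(k)\|_{\ell^{r'}_k(\mathbb{Z})}$ with $r'$ the Hölder conjugate of $r$. *)

theory Defs
  imports "HOL-Analysis.Analysis"
begin

text \<open>Functions on the torus T = R/2piZ are represented as 2pi-periodic functions
  real => complex.  Fourier coefficients with the normalisation 1/(2pi).\<close>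

definition fourier_coeff :: "(real \<Rightarrow> complex) \<Rightarrow> int \<Rightarrow> complex" where
  "fourier_coeff f k =
     complex_of_real (1 / (2 * pi)) *
     integral {0..2*pi} (\<lambda>x. f x * exp (- \<i> * of_int k * of_real x))"

definition hat_weight :: "real \<Rightarrow> (real \<Rightarrow> complex) \<Rightarrow> int \<Rightarrow> real" where
  "hat_weight s f k = (1 + (real_of_int k)^2) powr (s / 2) * cmod (fourier_coeff f k)"

definition hoelder_conj :: "ereal \<Rightarrow> ereal" where
  "hoelder_conj r = (if r = \<infinity> then 1 else if r = 1 then \<infinity>
                     else ereal (real_of_ereal r / (real_of_ereal r - 1)))"

definition in_hat_H :: "real \<Rightarrow> ereal \<Rightarrow> (real \<Rightarrow> complex) \<Rightarrow> bool" where
  "in_hat_H s r f = (if hoelder_conj r = \<infinity> then bdd_above (range (hat_weight s f))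
                     else (\<lambda>k. hat_weight s f k powr real_of_ereal (hoelder_conj r)) summable_on UNIV)"

definition hat_H_norm :: "real \<Rightarrow> ereal \<Rightarrow> (real \<Rightarrow> complex) \<Rightarrow> real" where
  "hat_H_norm s r f = (if hoelder_conj r = \<infinity> then (SUP k. hat_weight s f k)
     else (\<Sum>\<^sub>\<infinity>k. hat_weight s f k powr real_of_ereal (hoelder_conj r))
            powr (1 / real_of_ereal (hoelder_conj r)))"

text \<open>D m t is the m-th x-derivative of u t,
  Ut the time derivative.  Note d_x^(2j-1) conj(u) = conj(d_x^(2j-1) u).\<close>
definition is_periodic_solution ::
  "nat \<Rightarrow> real \<Rightarrow> ereal \<Rightarrow> real \<Rightarrow> (real \<Rightarrow> real \<Rightarrow> complex) \<Rightarrow> bool" where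
  "is_periodic_solution j s r T u \<longleftrightarrow>
     (\<forall>t x. u t (x + 2 * pi) = u t x) \<and>
     (\<forall>t\<in>{-T<..<T}. in_hat_H s r (u t)) \<and>
     (\<exists>D Ut. D 0 = u \<and>
        (\<forall>m. \<forall>t\<in>{-T<..<T}. \<forall>x.
            ((\<lambda>y. D m t y) has_vector_derivative D (Suc m) t x) (at x)) \<and>
        (\<forall>t\<in>{-T<..<T}. \<forall>x. ((\<lambda>\<tau>. u \<tau> x) has_vector_derivative Ut t x) (at t)) \<and>
        (\<forall>t\<in>{-T<..<T}. \<forall>x.
            \<i> * Ut t x + (-1) ^ (j + 1) * D (2 * j) t x
              = \<i> * (u t x)\<^sup>2 * cnj (D (2 * j - 1) t x)))"

end

theory Submission
  imports Defs "HOL-Real_Asymp.Real_Asymp"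
begin

text \<open>Plane waves c e^(i(Nx + \<omega>t)) solve the equation exactly: on them |u|^2 = |c|^2 is constant,
  so the nonlinearity acts linearly and only shifts the frequency \<omega> by an amount proportional
  to |c|^2.  Two waves in the mode N with amplitudes \<langle>N\<rangle>^(-s) and (1 + \<eta>) \<langle>N\<rangle>^(-s) start at
  distance \<eta>, but their frequencies differ by (2\<eta> + \<eta>^2) N^(2j-1) / \<langle>N\<rangle>^(2s), which is unbounded
  in N exactly because s < j - 1/2.  So for large N they reach opposite phases, and hence
  distance 2 + \<eta>, before time T.\<close>

lemma has_integral_exp_int_mult:
  "((\<lambda>x. exp (\<i> * of_real (of_int m * x))) has_integral
     (if m = 0 then of_real (2 * pi) else 0)) {0..2 * pi}"
proof (cases "m = 0")
  case True
  then show ?thesis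
    using has_integral_const_real[of "1::complex" 0 "2 * pi"] by (simp add: scaleR_conv_of_real)
next
  case False
  define G where "G z = exp (\<i> * of_int m * z) / (\<i> * of_int m)" for z :: complex
  have "((\<lambda>x. G (of_real x)) has_vector_derivative exp (\<i> * of_real (of_int m * x)))
          (at x within {0..2 * pi})" for x
  proof -
    have "(G has_field_derivative exp (\<i> * of_int m * of_real x)) (at (of_real x))"
      unfolding G_def using False by (auto intro!: derivative_eq_intros simp: field_simps)
    from has_vector_derivative_real_field[OF this] show ?thesis by (simp add: mult.assoc)
  qed
  then have "((\<lambda>x. exp (\<i> * of_real (of_int m * x))) has_integral
               (G (of_real (2 * pi)) - G (of_real 0))) {0..2 * pi}"
    by (intro fundamental_theorem_of_calculus) auto
  moreover have "exp (\<i> * of_int m * complex_of_real (2 * pi)) = 1"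
    using exp_2pi_1_int[of m] by (simp add: mult_ac)
  ultimately show ?thesis
    using False by (simp add: G_def)
qed

lemma fourier_coeff_mode:
  "fourier_coeff (\<lambda>x. c * exp (\<i> * of_real (of_int N * x))) k = (if k = N then c else 0)"
proof -
  have "(\<lambda>x. c * exp (\<i> * of_real (of_int N * x)) * exp (- \<i> * of_int k * of_real x))
      = (\<lambda>x. c * exp (\<i> * of_real (of_int (N - k) * x)))"
    by (simp add: mult.assoc exp_add[symmetric] algebra_simps)
  moreover have "integral {0..2 * pi} (\<lambda>x. c * exp (\<i> * of_real (of_int (N - k) * x)))
      = c * (if N - k = 0 then of_real (2 * pi) else 0)"
    using has_integral_mult_right[OF has_integral_exp_int_mult] by (rule integral_unique)
  ultimately show ?thesis
    by (auto simp: fourier_coeff_def scaleR_conv_of_real)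
qed

lemma hoelder_conj_gt_0:
  assumes "1 \<le> r" "hoelder_conj r \<noteq> \<infinity>"
  shows "real_of_ereal (hoelder_conj r) > 0"
  using assms by (cases r) (auto simp: hoelder_conj_def split: if_splits)

lemma hat_H_single_frequency:
  assumes "1 \<le> r" "w \<ge> 0" and weight: "hat_weight s f = (\<lambda>k. if k = N then w else 0)"
  shows "in_hat_H s r f" "hat_H_norm s r f = w"
proof -
  have "in_hat_H s r f \<and> hat_H_norm s r f = w"
  proof (cases "hoelder_conj r = \<infinity>")
    case True
    have "range (\<lambda>k. if k = N then w else 0) \<subseteq> {0, w}"
      by auto
    then have "bdd_above (range (\<lambda>k. if k = N then w else 0))"
      by (rule bdd_above_mono[rotated]) auto
    moreover have "(SUP k. if k = N then w else 0) = w"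
      by (rule cSup_eq_maximum) (use \<open>w \<ge> 0\<close> in auto)
    ultimately show ?thesis
      using True by (simp add: in_hat_H_def hat_H_norm_def weight)
  next
    case False
    define p where "p = real_of_ereal (hoelder_conj r)"
    have "p > 0"
      using hoelder_conj_gt_0[OF \<open>1 \<le> r\<close> False] by (simp add: p_def)
    have "((\<lambda>k. (if k = N then w else 0) powr p) has_sum w powr p) {N}"
      using has_sum_finite[of "{N}" "\<lambda>k. (if k = N then w else 0) powr p"] by simp
    then have "((\<lambda>k. (if k = N then w else 0) powr p) has_sum w powr p) UNIV"
      by (rule has_sum_cong_neutral[THEN iffD1, rotated -1]) auto
    moreover have "(w powr p) powr (1 / p) = w"
      using \<open>p > 0\<close> \<open>w \<ge> 0\<close> by (cases "w = 0") (auto simp: powr_powr)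
    ultimately show ?thesis
      using False by (auto simp: in_hat_H_def hat_H_norm_def weight p_def[symmetric]
                                 summable_on_def infsumI)
  qed
  then show "in_hat_H s r f" "hat_H_norm s r f = w"
    by auto
qed

lemma hat_H_mode:
  fixes c :: complex and N :: int
  assumes "1 \<le> r"
  defines "f \<equiv> \<lambda>x. c * exp (\<i> * of_real (of_int N * x))"
  shows "in_hat_H s r f" "hat_H_norm s r f = (1 + (of_int N)\<^sup>2) powr (s / 2) * cmod c"
proof -
  have "hat_weight s f = (\<lambda>k. if k = N then (1 + (of_int N)\<^sup>2) powr (s / 2) * cmod c else 0)"
    unfolding hat_weight_def f_def fourier_coeff_mode by auto
  then show "in_hat_H s r f" "hat_H_norm s r f = (1 + (of_int N)\<^sup>2) powr (s / 2) * cmod c"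
    by (intro hat_H_single_frequency[OF assms(1)]; simp)+
qed

definition plane_wave :: "complex \<Rightarrow> real \<Rightarrow> int \<Rightarrow> real \<Rightarrow> real \<Rightarrow> complex" where
  "plane_wave c \<omega> N t x = c * exp (\<i> * of_real (of_int N * x + \<omega> * t))"

definition dispersion :: "nat \<Rightarrow> real \<Rightarrow> int \<Rightarrow> real" where
  "dispersion j a N = (-1) ^ j * a\<^sup>2 * of_int N ^ (2 * j - 1) - of_int N ^ (2 * j)"

lemma plane_wave_eq_mode:
  "plane_wave c \<omega> N t = (\<lambda>x. (c * exp (\<i> * of_real (\<omega> * t))) * exp (\<i> * of_real (of_int N * x)))"
  by (rule ext) (simp add: plane_wave_def exp_add[symmetric] algebra_simps)

lemma plane_wave_periodic: "plane_wave c \<omega> N t (x + 2 * pi) = plane_wave c \<omega> N t x"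
proof -
  have "\<i> * of_real (of_int N * (x + 2 * pi) + \<omega> * t)
      = \<i> * of_real (of_int N * x + \<omega> * t) + \<i> * (of_int N * (of_real pi * 2))"
    by (simp add: algebra_simps)
  then show ?thesis
    unfolding plane_wave_def by (simp only: exp_plus_2pin)
qed

lemma norm_plane_wave: "cmod (plane_wave c \<omega> N t x) = cmod c"
  by (simp add: plane_wave_def norm_mult norm_exp_i_times)

lemma plane_wave_has_x_derivative:
  "((\<lambda>y. (\<i> * of_int N) ^ m * plane_wave c \<omega> N t y) has_vector_derivative
     (\<i> * of_int N) ^ Suc m * plane_wave c \<omega> N t x) (at x)"
proof -
  define g where "g z = (\<i> * of_int N) ^ m * c * exp (\<i> * (of_int N * z + of_real (\<omega> * t)))"
    for z :: complex
  have "(g has_field_derivative (\<i> * of_int N) ^ Suc m * plane_wave c \<omega> N t x) (at (of_real x))"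
    unfolding g_def plane_wave_def by (auto intro!: derivative_eq_intros simp: algebra_simps)
  from has_vector_derivative_real_field[OF this] show ?thesis
    unfolding g_def plane_wave_def by (simp add: algebra_simps)
qed

lemma plane_wave_has_t_derivative:
  "((\<lambda>\<tau>. plane_wave c \<omega> N \<tau> x) has_vector_derivative \<i> * of_real \<omega> * plane_wave c \<omega> N t x) (at t)"
proof -
  define g where "g z = c * exp (\<i> * (of_real (of_int N * x) + of_real \<omega> * z))" for z :: complex
  have "(g has_field_derivative \<i> * of_real \<omega> * plane_wave c \<omega> N t x) (at (of_real t))"
    unfolding g_def plane_wave_def by (auto intro!: derivative_eq_intros simp: algebra_simps)
  from has_vector_derivative_real_field[OF this] show ?thesis
    unfolding g_def plane_wave_def by (simp add: algebra_simps)
qed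

lemma plane_wave_equation:
  assumes "1 \<le> j" and "\<omega> = dispersion j (cmod c) N" and "P = plane_wave c \<omega> N t x"
  shows "\<i> * (\<i> * of_real \<omega> * P) + (-1) ^ (j + 1) * ((\<i> * of_int N) ^ (2 * j) * P)
       = \<i> * P\<^sup>2 * cnj ((\<i> * of_int N) ^ (2 * j - 1) * P)"
proof -
  obtain k where j: "j = Suc k"
    using assms(1) by (cases j) auto
  have even_power: "(\<i> * of_int N) ^ (2 * j) = (-1) ^ j * of_int N ^ (2 * j)"
    by (simp only: power_mult_distrib) (simp add: power_mult)
  have odd_power: "cnj ((\<i> * of_int N) ^ (2 * j - 1)) = \<i> * (-1) ^ j * of_int N ^ (2 * j - 1)"
    by (simp only: power_mult_distrib complex_cnj_mult complex_cnj_power) (simp add: j power_mult)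
  have "P * cnj P = of_real ((cmod c)\<^sup>2)"
    using norm_plane_wave by (metis assms(3) complex_norm_square)
  then have "\<i> * P\<^sup>2 * cnj ((\<i> * of_int N) ^ (2 * j - 1) * P)
      = - ((-1) ^ j * of_real ((cmod c)\<^sup>2) * of_int N ^ (2 * j - 1)) * P"
    unfolding complex_cnj_mult odd_power power2_eq_square
    by (simp add: algebra_simps)
  moreover have "\<i> * (\<i> * of_real \<omega> * P) + (-1) ^ (j + 1) * ((\<i> * of_int N) ^ (2 * j) * P)
      = (- of_real \<omega> - of_int N ^ (2 * j)) * P"
    unfolding even_power by (simp add: algebra_simps)
  ultimately show ?thesis
    by (simp add: assms(2) dispersion_def)
qed

lemma plane_wave_is_periodic_solution:
  assumes "1 \<le> j" "1 \<le> r"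
  shows "is_periodic_solution j s r T (plane_wave c (dispersion j (cmod c) N) N)"
  unfolding is_periodic_solution_def
proof (intro conjI ballI allI
    exI[of _ "\<lambda>m t y. (\<i> * of_int N) ^ m * plane_wave c (dispersion j (cmod c) N) N t y"]
    exI[of _ "\<lambda>t x. \<i> * of_real (dispersion j (cmod c) N) * plane_wave c (dispersion j (cmod c) N) N t x"])
  show "in_hat_H s r (plane_wave c (dispersion j (cmod c) N) N t)" for t
    unfolding plane_wave_eq_mode by (rule hat_H_mode(1)[OF assms(2)])
qed (rule plane_wave_periodic plane_wave_has_x_derivative plane_wave_has_t_derivative
          plane_wave_equation[OF assms(1) refl refl] | simp)+

lemma hat_H_norm_plane_wave:
  assumes "1 \<le> r"
  shows "hat_H_norm s r (plane_wave c \<omega> N t) = (1 + (of_int N)\<^sup>2) powr (s / 2) * cmod c"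
  unfolding plane_wave_eq_mode hat_H_mode(2)[OF assms] by (simp add: norm_mult norm_exp_i_times)

lemma hat_H_norm_plane_wave_diff:
  assumes "1 \<le> r"
  shows "hat_H_norm s r (\<lambda>x. plane_wave c \<omega> N t x - plane_wave c' \<omega>' N t x)
       = (1 + (of_int N)\<^sup>2) powr (s / 2) *
         cmod (c * exp (\<i> * of_real (\<omega> * t)) - c' * exp (\<i> * of_real (\<omega>' * t)))"
proof -
  have "(\<lambda>x. plane_wave c \<omega> N t x - plane_wave c' \<omega>' N t x)
      = (\<lambda>x. (c * exp (\<i> * of_real (\<omega> * t)) - c' * exp (\<i> * of_real (\<omega>' * t)))
              * exp (\<i> * of_real (of_int N * x)))"
    by (simp add: plane_wave_eq_mode algebra_simps)
  then show ?thesis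
    by (simp only: hat_H_mode(2)[OF assms])
qed

lemma hat_H_norm_plane_wave_diff_opposite_phase:
  assumes "1 \<le> r" "a \<ge> 0" "b \<ge> 0" and opposite: "exp (\<i> * of_real ((\<omega>' - \<omega>) * t)) = -1"
  shows "hat_H_norm s r (\<lambda>x. plane_wave (of_real a) \<omega> N t x - plane_wave (of_real b) \<omega>' N t x)
       = (1 + (of_int N)\<^sup>2) powr (s / 2) * (a + b)"
proof -
  have "exp (\<i> * of_real (\<omega>' * t))
      = exp (\<i> * of_real (\<omega> * t)) * exp (\<i> * of_real ((\<omega>' - \<omega>) * t))"
    by (simp add: algebra_simps flip: exp_add)
  then have "of_real a * exp (\<i> * of_real (\<omega> * t)) - of_real b * exp (\<i> * of_real (\<omega>' * t))
      = of_real (a + b) * exp (\<i> * of_real (\<omega> * t))"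
    unfolding opposite by (simp add: algebra_simps)
  then show ?thesis
    using assms(2,3)
    by (simp add: hat_H_norm_plane_wave_diff[OF assms(1)] norm_mult norm_exp_eq_Re del: of_real_add)
qed

lemma exp_i_eq_minus_one_within:
  assumes "T > 0" "pi / T < \<bar>\<omega>\<bar>"
  obtains t where "t \<in> {-T<..<T}" "exp (\<i> * of_real (\<omega> * t)) = -1"
proof
  have "\<bar>\<omega>\<bar> > 0"
    using assms by (smt (verit) divide_pos_pos pi_gt_zero)
  then show "pi / \<bar>\<omega>\<bar> \<in> {-T<..<T}"
    using assms by (auto simp: field_simps intro: order.strict_trans[of _ 0])
  show "exp (\<i> * of_real (\<omega> * (pi / \<bar>\<omega>\<bar>))) = -1"
    using \<open>\<bar>\<omega>\<bar> > 0\<close> by (cases "\<omega> \<ge> 0") (simp_all add: exp_minus)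
qed

lemma dispersion_diff:
  "dispersion j a N - dispersion j b N = (-1) ^ j * of_int N ^ (2 * j - 1) * (a\<^sup>2 - b\<^sup>2)"
  by (simp add: dispersion_def algebra_simps)

lemma power_div_bracket_powr_tendsto_at_top:
  assumes "1 \<le> j" "s < real j - 1 / 2"
  shows "filterlim (\<lambda>N. real N ^ (2 * j - 1) / (1 + (real N)\<^sup>2) powr s) at_top sequentially"
proof -
  obtain k where j: "j = Suc k"
    using assms(1) by (cases j) auto
  have "filterlim (\<lambda>x::real. x ^ (2 * k + 1) / (1 + x\<^sup>2) powr s) at_top at_top"
    using assms(2) unfolding j by real_asymp
  then show ?thesis
    unfolding j by (auto intro: filterlim_compose filterlim_real_sequentially)
qed

lemma plane_waves_separate:
  fixes N :: int
  assumes "1 \<le> j" "1 \<le> r" "T > 0" "\<eta> > 0"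
    and fast: "pi / (T * \<eta>) < of_int N ^ (2 * j - 1) / (1 + (of_int N)\<^sup>2) powr s"
  obtains u v where
    "is_periodic_solution j s r T u" "is_periodic_solution j s r T v"
    "hat_H_norm s r (u 0) = 1" "hat_H_norm s r (v 0) = 1 + \<eta>"
    "hat_H_norm s r (\<lambda>x. u 0 x - v 0 x) = \<eta>"
    "\<exists>t\<in>{-T<..<T}. hat_H_norm s r (\<lambda>x. u t x - v t x) = 2 + \<eta>"
proof -
  have bracket_pos: "1 + (of_int N)\<^sup>2 > (0::real)"
    by (simp add: add_pos_nonneg)
  define W where "W = (1 + (of_int N)\<^sup>2) powr (s / 2)"
  have "W > 0"
    unfolding W_def using bracket_pos by simp
  have W2: "W\<^sup>2 = (1 + (of_int N)\<^sup>2) powr s"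
    unfolding W_def using bracket_pos by (simp add: powr_powr flip: powr_realpow)
  define a b where "a = 1 / W" and "b = (1 + \<eta>) / W"
  have "a > 0" "a < b" and Wa: "W * a = 1" and Wb: "W * b = 1 + \<eta>"
    using \<open>W > 0\<close> \<open>\<eta> > 0\<close> by (simp_all add: a_def b_def divide_strict_right_mono)
  define q where "q = of_int N ^ (2 * j - 1) / (1 + (of_int N)\<^sup>2) powr s"
  have "q > 0"
    using fast \<open>T > 0\<close> \<open>\<eta> > 0\<close> by (smt (verit) q_def divide_pos_pos mult_pos_pos pi_gt_zero)
  define \<omega>a \<omega>b where "\<omega>a = dispersion j a N" and "\<omega>b = dispersion j b N"
  have "\<omega>b - \<omega>a = (-1) ^ j * ((2 * \<eta> + \<eta>\<^sup>2) * q)"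
    unfolding \<omega>a_def \<omega>b_def dispersion_diff q_def a_def b_def W2[symmetric]
    using \<open>W > 0\<close> by (simp add: field_simps power2_eq_square)
  then have "\<bar>\<omega>b - \<omega>a\<bar> = (2 * \<eta> + \<eta>\<^sup>2) * q"
    using \<open>\<eta> > 0\<close> \<open>q > 0\<close> by (simp add: abs_mult)
  moreover have "pi / T < \<eta> * q"
    using mult_strict_left_mono[OF fast[folded q_def] \<open>\<eta> > 0\<close>] \<open>\<eta> > 0\<close> by simp
  moreover have "\<eta> * q \<le> (2 * \<eta> + \<eta>\<^sup>2) * q"
    using \<open>\<eta> > 0\<close> \<open>q > 0\<close> by (intro mult_right_mono) auto
  ultimately have "pi / T < \<bar>\<omega>b - \<omega>a\<bar>"
    by linarith
  then obtain t0 where "t0 \<in> {-T<..<T}" and opposite: "exp (\<i> * of_real ((\<omega>b - \<omega>a) * t0)) = -1"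
    using exp_i_eq_minus_one_within \<open>T > 0\<close> by blast
  define u v where "u = plane_wave (of_real a) \<omega>a N" and "v = plane_wave (of_real b) \<omega>b N"
  show thesis
  proof
    show "is_periodic_solution j s r T u" "is_periodic_solution j s r T v"
      using plane_wave_is_periodic_solution[OF assms(1,2)] \<open>a > 0\<close> \<open>a < b\<close>
      by (metis u_def v_def \<omega>a_def \<omega>b_def norm_of_real abs_of_pos order.strict_trans)+
    show "hat_H_norm s r (u 0) = 1" "hat_H_norm s r (v 0) = 1 + \<eta>"
      using \<open>a > 0\<close> \<open>a < b\<close> Wa Wb
      by (simp_all add: u_def v_def hat_H_norm_plane_wave[OF assms(2)] W_def[symmetric])
    show "hat_H_norm s r (\<lambda>x. u 0 x - v 0 x) = \<eta>"
      using \<open>a < b\<close> Wa Wb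
      by (simp add: u_def v_def hat_H_norm_plane_wave_diff[OF assms(2)] W_def[symmetric]
                    right_diff_distrib flip: of_real_diff)
    have "hat_H_norm s r (\<lambda>x. u t0 x - v t0 x) = W * (a + b)"
      unfolding u_def v_def W_def using \<open>a > 0\<close> \<open>a < b\<close> opposite
      by (intro hat_H_norm_plane_wave_diff_opposite_phase[OF assms(2)]) auto
    then show "\<exists>t\<in>{-T<..<T}. hat_H_norm s r (\<lambda>x. u t x - v t x) = 2 + \<eta>"
      using \<open>t0 \<in> {-T<..<T}\<close> Wa Wb by (auto simp: distrib_left)
  qed
qed

theorem proposition6p2:
  fixes j :: nat and r :: ereal and s :: real
  assumes "1 \<le> j" and "1 \<le> r" and "s < real j - 1 / 2"
  shows "\<forall>T>0. \<exists>R>0. \<exists>\<epsilon>>0. \<forall>\<delta>>0. \<exists>u v.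
           is_periodic_solution j s r T u \<and> is_periodic_solution j s r T v \<and>
           hat_H_norm s r (u 0) \<le> R \<and> hat_H_norm s r (v 0) \<le> R \<and>
           hat_H_norm s r (\<lambda>x. u 0 x - v 0 x) < \<delta> \<and>
           (\<exists>t\<in>{-T<..<T}. \<epsilon> \<le> hat_H_norm s r (\<lambda>x. u t x - v t x))"
proof (intro allI impI exI[of _ "2::real"] conjI zero_less_numeral)
  fix T \<delta> :: real
  assume "T > 0" "\<delta> > 0"
  define \<eta> where "\<eta> = min (\<delta> / 2) 1"
  have "\<eta> > 0" "\<eta> < \<delta>" "\<eta> \<le> 1"
    using \<open>\<delta> > 0\<close> by (auto simp: \<eta>_def)
  have "\<forall>\<^sub>F N in sequentially. pi / (T * \<eta>) < real N ^ (2 * j - 1) / (1 + (real N)\<^sup>2) powr s"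
    using power_div_bracket_powr_tendsto_at_top[OF assms(1,3)] by (simp add: filterlim_at_top_dense)
  then obtain N :: nat
    where "pi / (T * \<eta>) < of_int (int N) ^ (2 * j - 1) / (1 + (of_int (int N))\<^sup>2) powr s"
    by (auto simp: eventually_sequentially)
  from plane_waves_separate[OF assms(1,2) \<open>T > 0\<close> \<open>\<eta> > 0\<close> this]
  obtain u v where "is_periodic_solution j s r T u" "is_periodic_solution j s r T v"
    "hat_H_norm s r (u 0) = 1" "hat_H_norm s r (v 0) = 1 + \<eta>"
    "hat_H_norm s r (\<lambda>x. u 0 x - v 0 x) = \<eta>"
    "\<exists>t\<in>{-T<..<T}. hat_H_norm s r (\<lambda>x. u t x - v t x) = 2 + \<eta>" .
  then show "\<exists>u v. is_periodic_solution j s r T u \<and> is_periodic_solution j s r T v \<and>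
           hat_H_norm s r (u 0) \<le> 2 \<and> hat_H_norm s r (v 0) \<le> 2 \<and>
           hat_H_norm s r (\<lambda>x. u 0 x - v 0 x) < \<delta> \<and>
           (\<exists>t\<in>{-T<..<T}. 2 \<le> hat_H_norm s r (\<lambda>x. u t x - v t x))"
    using \<open>\<eta> > 0\<close> \<open>\<eta> < \<delta>\<close> \<open>\<eta> \<le> 1\<close> by (intro exI[of _ u] exI[of _ v]) force
qed

end
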